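(* In the setting below, for any epoch $t$, with probability at least $1-\delta$ the following hold simultaneously for all honest nodes $k\in\mathcal{G}$: (a) $\|\mu_t^{(k)}-\nabla f(\tilde{x}_{t-1})\|\le\mathcal{V}\sqrt{C/B_t}$; (b) $\|\mu_t^{(k)}-\mu_t^{\mathrm{med}}\|\le4\mathcal{V}\sqrt{C/B_t}$ and $\|\mu_t^{\mathrm{med}}-\nabla f(\tilde{x}_{t-1})\|\le3\mathcal{V}\sqrt{C/B_t}$, where $C=2\log(2K/\delta)$.
   Context: Setting: $f(x)=\mathbb{E}_{\xi\sim\mathcal{D}}f(x;\xi)$ with $\|\nabla f(x;\xi)-\nabla f(x)\|\le\mathcal{V}$ for all $x$ and all $\xi\sim\mathcal{D}$; $\delta\in(0,1)$. There are $K$ worker nodes; the honest set $\mathcal{G}$ satisfies $|\mathcal{G}|\ge(1-\alpha)K$ with $\alpha\in[0,1/2)$, the other nodes being Byzantine. At epoch $t$, each $k\in\mathcal{G}$ sends $\mu_t^{(k)}=\frac{1}{B_t}\sum_{i=1}^{B_t}\nabla f(\tilde{x}_{t-1};\xi_{t,i}^{(k)})$ with i.i.d. samples $\xi_{t,i}^{(k)}\sim\mathcal{D}$; each Byzantine node sends an arbitrary vector. With $\mathfrak{T}_\mu=2\mathcal{V}\sqrt{C/B_t}$, $\mu_t^{\mathrm{med}}$ is defined as $\mu_t^{(k)}$ for any node $k$ such that $|\{k'\in[K]:\|\mu_t^{(k')}-\mu_t^{(k)}\|\le\mathfrak{T}_\mu\}|>K/2$. *)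

theory Defs
  imports "HOL-Probability.Probability"
begin

definition med_node :: "nat \<Rightarrow> real \<Rightarrow> (nat \<Rightarrow> 'a::real_normed_vector) \<Rightarrow> nat \<Rightarrow> bool" where
  "med_node K T v j \<longleftrightarrow> j \<in> {1..K} \<and>
     real (card {k' \<in> {1..K}. norm (v k' - v j) \<le> T}) > real K / 2"

end

theory Submission
  imports Defs
begin

text \<open>
  For one honest node the deviations gs x (\<xi> k i) - gF x are independent, centred and bounded
  by V, so their mean concentrates with a dimension-free bound, by Pinelis' cosh argument: for
  norm d \<le> c one has cosh (norm (x + d)) \<le> cosh (norm x) * cosh c + (sinh c / c) times a term
  linear in d (a consequence of the convexity of u \<mapsto> cosh (sqrt u)), and that term has mean
  zero. Hence, for a sum S of n such vectors, E cosh (l * norm S) \<le> cosh (l * c) ^ n \<le>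
  exp (n * (l * c) ^ 2 / 2), and Markov's inequality gives the Hoeffding bound
  2 exp (- r ^ 2 / (2 n c ^ 2)) for norm S \<ge> r, which is \<delta> / K at the stated radius.
  A union bound over the honest nodes gives (a).
  On that event the honest nodes, a strict majority, lie within r of the true gradient, so
  they are pairwise 2 r close and every honest node is an admissible median. The
  2 r-neighbourhood of any admissible median is also a majority and therefore contains an
  honest node; (b) follows by the triangle inequality.
\<close>

section \<open>Hyperbolic inequalities\<close>

lemma sinh_scale_le:
  fixes s v :: real
  assumes "0 \<le> s" "s \<le> 1" "0 \<le> v"
  shows "sinh (s * v) \<le> s * sinh v"
proof -
  have "convex_on {0..} sinh"
  proof (rule convex_on_realI[where f' = cosh])
    show "\<And>x. (sinh has_real_derivative cosh x) (at x)"
      by (auto intro!: derivative_eq_intros)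
  qed (auto simp: connected_Ici cosh_real_nonneg_le_iff)
  from convex_onD[OF this, of s 0 v] assms show ?thesis by simp
qed

lemma sinh_divide_self_mono:
  fixes s1 s2 :: real
  assumes "0 < s1" "s1 \<le> s2"
  shows "sinh s1 / s1 \<le> sinh s2 / s2"
proof -
  have "sinh s1 = sinh ((s1 / s2) * s2)" using assms by simp
  also have "\<dots> \<le> (s1 / s2) * sinh s2" using assms by (intro sinh_scale_le) auto
  finally show ?thesis using assms by (simp add: field_simps)
qed

lemma convex_on_cosh_sqrt: "convex_on {0..} (\<lambda>u::real. cosh (sqrt u))"
proof (rule convex_on_linorderI)
  have convex_pos: "convex_on {0<..} (\<lambda>u::real. cosh (sqrt u))"
  proof (rule convex_on_realI[where f' = "\<lambda>u. (sinh (sqrt u) / sqrt u) / 2"])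
    show "((\<lambda>u. cosh (sqrt u)) has_real_derivative (sinh (sqrt u) / sqrt u) / 2) (at u)"
      if "u \<in> {0<..}" for u
      using that by (auto intro!: derivative_eq_intros simp: field_simps)
    show "(sinh (sqrt u) / sqrt u) / 2 \<le> (sinh (sqrt v) / sqrt v) / 2"
      if "u \<in> {0<..}" "v \<in> {0<..}" "u \<le> v" for u v
      using that by (intro divide_right_mono sinh_divide_self_mono) auto
  qed simp
  fix t x y :: real
  assume t: "0 < t" "t < 1" and xy: "x \<in> {0..}" "y \<in> {0..}" "x < y"
  show "cosh (sqrt ((1 - t) *\<^sub>R x + t *\<^sub>R y)) \<le> (1 - t) * cosh (sqrt x) + t * cosh (sqrt y)"
  proof (cases "x = 0")
    case False
    with convex_onD[OF convex_pos, of t x y] t xy show ?thesis by auto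
  next
    case True
    \<comment> \<open>Since cosh (2 z) = 1 + 2 sinh z ^ 2, the chord inequality from 0 reduces to
      sinh (s v) \<le> s sinh v with s = sqrt t.\<close>
    define v where "v = sqrt y / 2"
    have v: "0 \<le> v" using xy by (simp add: v_def)
    have half_angle: "cosh (2 * z) = 1 + 2 * sinh z ^ 2" for z :: real
      by (simp add: cosh_double cosh_square_eq)
    have "sinh (sqrt t * v) \<le> sqrt t * sinh v"
      using t v by (intro sinh_scale_le) auto
    then have sinh_sq: "sinh (sqrt t * v) ^ 2 \<le> (sqrt t * sinh v) ^ 2"
      using t v by (intro power_mono) auto
    have "cosh (sqrt ((1 - t) *\<^sub>R x + t *\<^sub>R y)) = 1 + 2 * sinh (sqrt t * v) ^ 2"
      using True by (simp add: v_def real_sqrt_mult flip: half_angle)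
    also have "\<dots> \<le> (1 - t) + t * (1 + 2 * sinh v ^ 2)"
      using sinh_sq t by (simp add: power_mult_distrib algebra_simps)
    also have "\<dots> = (1 - t) * cosh (sqrt x) + t * cosh (sqrt y)"
      using True by (simp add: v_def flip: half_angle)
    finally show ?thesis .
  qed
qed simp

lemma cosh_sqrt_chord_le:
  fixes a c t :: real
  assumes "0 \<le> a" "0 \<le> c" "-1 \<le> t" "t \<le> 1"
  shows "cosh (sqrt (a\<^sup>2 + c\<^sup>2 + 2 * a * c * t)) \<le> cosh a * cosh c + t * sinh a * sinh c"
proof -
  define s where "s = (1 + t) / 2"
  have s: "0 \<le> s" "s \<le> 1" using assms by (auto simp: s_def)
  have "cosh (sqrt (a\<^sup>2 + c\<^sup>2 + 2 * a * c * t))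
      = cosh (sqrt ((1 - s) * (a - c)\<^sup>2 + s * (a + c)\<^sup>2))"
    by (rule arg_cong[where f = "\<lambda>u. cosh (sqrt u)"]) (simp add: s_def power2_eq_square field_simps)
  also have "\<dots> \<le> (1 - s) * cosh (sqrt ((a - c)\<^sup>2)) + s * cosh (sqrt ((a + c)\<^sup>2))"
    using convex_onD[OF convex_on_cosh_sqrt s, of "(a - c)\<^sup>2" "(a + c)\<^sup>2"] by simp
  also have "\<dots> = (1 - s) * cosh (a - c) + s * cosh (a + c)"
    using assms by (simp add: cosh_real_abs)
  also have "\<dots> = cosh a * cosh c + t * sinh a * sinh c"
    by (simp add: cosh_add cosh_diff s_def field_simps)
  finally show ?thesis .
qed

text \<open>The gradient of cosh \<circ> norm; the formula is also right at 0, where division by zero gives 0.\<close>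

definition grad_cosh_norm :: "'a::real_normed_vector \<Rightarrow> 'a" where
  "grad_cosh_norm x = (sinh (norm x) / norm x) *\<^sub>R x"

lemma norm_grad_cosh_norm: "norm (grad_cosh_norm x) = sinh (norm x)"
  by (cases "x = 0") (simp_all add: grad_cosh_norm_def)

lemma cosh_norm_add_le:
  fixes x d :: "'a::real_inner"
  assumes "norm d \<le> c"
  shows "cosh (norm (x + d)) \<le> cosh (norm x) * cosh c + sinh c / c * (grad_cosh_norm x \<bullet> d)"
proof (cases "x = 0 \<or> c = 0")
  case True
  with order_trans[OF norm_ge_zero assms] assms show ?thesis
    by (auto simp: cosh_real_nonneg_le_iff grad_cosh_norm_def)
next
  case False
  define a where "a = norm x"
  define t where "t = (x \<bullet> d) / (a * c)"
  have ac: "0 < a" "0 < c" using False order_trans[OF norm_ge_zero assms] by (auto simp: a_def)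
  have "\<bar>x \<bullet> d\<bar> \<le> a * c"
    using Cauchy_Schwarz_ineq2[of x d] assms ac
    by (simp add: a_def order_trans[OF _ mult_left_mono])
  then have t: "-1 \<le> t" "t \<le> 1" using ac by (auto simp: t_def divide_simps abs_le_iff)
  have "(norm (x + d))\<^sup>2 = a\<^sup>2 + 2 * (x \<bullet> d) + (norm d)\<^sup>2"
    by (simp add: a_def power2_norm_eq_inner inner_add_left inner_add_right inner_commute)
  also have "\<dots> \<le> a\<^sup>2 + c\<^sup>2 + 2 * a * c * t"
    using assms ac by (simp add: t_def power_mono)
  finally have "cosh (norm (x + d)) \<le> cosh (sqrt (a\<^sup>2 + c\<^sup>2 + 2 * a * c * t))"
    by (subst cosh_real_nonneg_le_iff) (auto intro: real_le_rsqrt order_trans[OF zero_le_power2])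
  also have "\<dots> \<le> cosh a * cosh c + t * sinh a * sinh c"
    using ac t by (intro cosh_sqrt_chord_le) auto
  finally show ?thesis using ac by (simp add: grad_cosh_norm_def a_def t_def field_simps)
qed

lemma cosh_le_exp_half_square: "cosh (y::real) \<le> exp (y\<^sup>2 / 2)"
proof -
  have "cosh y \<le> exp (y\<^sup>2 / 2)" if "0 \<le> y" for y :: real
  proof -
    \<comment> \<open>Hoeffding's lemma for a fair sign, with range 2 and parameter y.\<close>
    have "-(2 * y) * (1 / 2) + ln (1 + (1 / 2) * (exp (2 * y) - 1)) \<le> (2 * y)\<^sup>2 / 8"
      using Hoeffdings_lemma_aux[of "2 * y" "1 / 2"] that by simp
    moreover have "1 + (1 / 2) * (exp (2 * y) - 1) = exp y * cosh y"
      by (simp add: cosh_def exp_minus field_simps flip: exp_add)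
    ultimately have "ln (cosh y) \<le> y\<^sup>2 / 2"
      by (simp add: ln_mult power2_eq_square)
    then show ?thesis by (metis cosh_real_pos exp_le_cancel_iff exp_ln)
  qed
  from this[of "\<bar>y\<bar>"] show ?thesis by simp
qed

section \<open>Concentration of sums of bounded random vectors\<close>

lemma (in prob_space) indep_var_integral_inner:
  fixes X Y :: "'a \<Rightarrow> 'x::euclidean_space"
  assumes indep: "indep_var borel X borel Y" and X: "integrable M X" and Y: "integrable M Y"
  shows "integrable M (\<lambda>\<omega>. X \<omega> \<bullet> Y \<omega>)"
    and "expectation (\<lambda>\<omega>. X \<omega> \<bullet> Y \<omega>) = expectation X \<bullet> expectation Y"
proof -
  have coords: "indep_var borel (\<lambda>\<omega>. X \<omega> \<bullet> b) borel (\<lambda>\<omega>. Y \<omega> \<bullet> b)" for b :: 'x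
    using indep_var_compose[OF indep, of "\<lambda>v. v \<bullet> b" borel "\<lambda>v. v \<bullet> b" borel]
    by (simp add: comp_def)
  note coord_int = integrable_inner_left[OF X] integrable_inner_left[OF Y]
  have inner_sum: "(\<lambda>\<omega>. X \<omega> \<bullet> Y \<omega>) = (\<lambda>\<omega>. \<Sum>b\<in>Basis. (X \<omega> \<bullet> b) * (Y \<omega> \<bullet> b))"
    by (rule ext, rule euclidean_inner)
  show "integrable M (\<lambda>\<omega>. X \<omega> \<bullet> Y \<omega>)"
    unfolding inner_sum by (rule Bochner_Integration.integrable_sum) (rule indep_var_integrable[OF coords coord_int])
  have "expectation (\<lambda>\<omega>. X \<omega> \<bullet> Y \<omega>)
      = (\<Sum>b\<in>Basis. expectation (\<lambda>\<omega>. (X \<omega> \<bullet> b) * (Y \<omega> \<bullet> b)))"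
    unfolding inner_sum by (rule Bochner_Integration.integral_sum) (rule indep_var_integrable[OF coords coord_int])
  also have "\<dots> = (\<Sum>b\<in>Basis. expectation (\<lambda>\<omega>. X \<omega> \<bullet> b) * expectation (\<lambda>\<omega>. Y \<omega> \<bullet> b))"
    by (rule sum.cong[OF refl]) (rule indep_var_lebesgue_integral[OF coords coord_int])
  also have "\<dots> = expectation X \<bullet> expectation Y"
    unfolding integral_inner_left[OF X] integral_inner_left[OF Y] by (rule euclidean_inner[symmetric])
  finally show "expectation (\<lambda>\<omega>. X \<omega> \<bullet> Y \<omega>) = expectation X \<bullet> expectation Y" .
qed

lemma (in prob_space) indep_var_sum_vector:
  fixes X :: "'i \<Rightarrow> 'a \<Rightarrow> 'x::euclidean_space"
  assumes "finite I" "i \<notin> I" and indep: "indep_vars (\<lambda>_. borel) X (insert i I)"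
  shows "indep_var borel (\<lambda>\<omega>. \<Sum>j\<in>I. X j \<omega>) borel (X i)"
proof -
  have "indep_var
    borel ((\<lambda>f. \<Sum>j\<in>I. f j) \<circ> (\<lambda>\<omega>. restrict (\<lambda>j. X j \<omega>) I))
    borel ((\<lambda>f. f i) \<circ> (\<lambda>\<omega>. restrict (\<lambda>j. X j \<omega>) {i}))"
    using assms by (intro indep_var_compose[OF indep_var_restrict[OF indep]]) auto
  also have "(\<lambda>f. \<Sum>j\<in>I. f j) \<circ> (\<lambda>\<omega>. restrict (\<lambda>j. X j \<omega>) I) = (\<lambda>\<omega>. \<Sum>j\<in>I. X j \<omega>)"
    by (auto simp: fun_eq_iff)
  also have "(\<lambda>f. f i) \<circ> (\<lambda>\<omega>. restrict (\<lambda>j. X j \<omega>) {i}) = X i"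
    by auto
  finally show ?thesis .
qed

lemma borel_measurable_sinh [measurable]: "(sinh :: real \<Rightarrow> real) \<in> borel_measurable borel"
  by (intro borel_measurable_continuous_onI continuous_intros)

lemma borel_measurable_cosh [measurable]: "(cosh :: real \<Rightarrow> real) \<in> borel_measurable borel"
  by (intro borel_measurable_continuous_onI continuous_intros)

lemma borel_measurable_grad_cosh_norm [measurable]:
  "(grad_cosh_norm :: 'a::euclidean_space \<Rightarrow> 'a) \<in> borel_measurable borel"
  unfolding grad_cosh_norm_def[abs_def] by measurable

lemma (in prob_space) expectation_cosh_norm_add_le:
  fixes S Y :: "'a \<Rightarrow> 'x::euclidean_space" and b c :: real
  assumes indep: "indep_var borel S borel Y"
    and S_bnd: "\<And>\<omega>. \<omega> \<in> space M \<Longrightarrow> norm (S \<omega>) \<le> b"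
    and Y_bnd: "\<And>\<omega>. \<omega> \<in> space M \<Longrightarrow> norm (Y \<omega>) \<le> c"
    and Y_mean: "expectation Y = 0"
  shows "expectation (\<lambda>\<omega>. cosh (norm (S \<omega> + Y \<omega>))) \<le> cosh c * expectation (\<lambda>\<omega>. cosh (norm (S \<omega>)))"
proof -
  have [measurable]: "S \<in> borel_measurable M" "Y \<in> borel_measurable M"
    using indep by (auto simp: indep_var_eq)
  have cosh_norm_bnd: "norm (cosh (norm v)) \<le> cosh B" if "norm v \<le> B" for v :: 'x and B
    using that order_trans[OF norm_ge_zero that] by (simp add: cosh_real_nonneg_le_iff)
  have int_sum: "integrable M (\<lambda>\<omega>. cosh (norm (S \<omega> + Y \<omega>)))"
    by (intro integrable_const_bound[where B = "cosh (b + c)"] AE_I2 cosh_norm_bnd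
        order_trans[OF norm_triangle_ineq add_mono[OF S_bnd Y_bnd]]) auto
  have int_S: "integrable M (\<lambda>\<omega>. cosh (norm (S \<omega>)))"
    by (intro integrable_const_bound[where B = "cosh b"] AE_I2 cosh_norm_bnd S_bnd) auto
  have int_grad: "integrable M (\<lambda>\<omega>. grad_cosh_norm (S \<omega>))"
    using S_bnd order_trans[OF norm_ge_zero S_bnd]
    by (intro integrable_const_bound[where B = "sinh b"] AE_I2) (auto simp: norm_grad_cosh_norm)
  have int_Y: "integrable M Y"
    by (intro integrable_const_bound[where B = c] AE_I2 Y_bnd) auto
  \<comment> \<open>The first-order term of cosh_norm_add_le has mean zero by independence.\<close>
  have "indep_var borel (\<lambda>\<omega>. grad_cosh_norm (S \<omega>)) borel Y"
    using indep_var_compose[OF indep borel_measurable_grad_cosh_norm measurable_ident]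
    by (simp add: comp_def)
  note first_order = indep_var_integral_inner[OF this int_grad int_Y]
  have "expectation (\<lambda>\<omega>. cosh (norm (S \<omega> + Y \<omega>)))
      \<le> expectation (\<lambda>\<omega>. cosh (norm (S \<omega>)) * cosh c + sinh c / c * (grad_cosh_norm (S \<omega>) \<bullet> Y \<omega>))"
    using int_sum int_S first_order(1) cosh_norm_add_le[OF Y_bnd] by (intro integral_mono) auto
  also have "\<dots> = cosh c * expectation (\<lambda>\<omega>. cosh (norm (S \<omega>)))"
    using int_S first_order by (simp add: Y_mean)
  finally show ?thesis .
qed

lemma (in prob_space) expectation_cosh_norm_sum_le:
  fixes Z :: "'i \<Rightarrow> 'a \<Rightarrow> 'x::euclidean_space" and c :: real
  assumes "finite I" and "indep_vars (\<lambda>_. borel) Z I"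
    and "\<And>i \<omega>. i \<in> I \<Longrightarrow> \<omega> \<in> space M \<Longrightarrow> norm (Z i \<omega>) \<le> c"
    and "\<And>i. i \<in> I \<Longrightarrow> expectation (Z i) = 0"
  shows "expectation (\<lambda>\<omega>. cosh (norm (\<Sum>i\<in>I. Z i \<omega>))) \<le> cosh c ^ card I"
  using assms
proof (induction I rule: finite_induct)
  case empty
  then show ?case by simp
next
  case (insert j I)
  have "expectation (\<lambda>\<omega>. cosh (norm (\<Sum>i\<in>insert j I. Z i \<omega>)))
      = expectation (\<lambda>\<omega>. cosh (norm ((\<Sum>i\<in>I. Z i \<omega>) + Z j \<omega>)))"
    using insert.hyps by (simp add: add.commute)
  also have "\<dots> \<le> cosh c * expectation (\<lambda>\<omega>. cosh (norm (\<Sum>i\<in>I. Z i \<omega>)))"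
  proof (rule expectation_cosh_norm_add_le)
    show "indep_var borel (\<lambda>\<omega>. \<Sum>i\<in>I. Z i \<omega>) borel (Z j)"
      using insert by (intro indep_var_sum_vector) auto
    show "norm (\<Sum>i\<in>I. Z i \<omega>) \<le> real (card I) * c" if "\<omega> \<in> space M" for \<omega>
      using sum_norm_le[of I "\<lambda>i. Z i \<omega>" "\<lambda>_. c"] insert.prems that by auto
  qed (use insert.prems in auto)
  also have "\<dots> \<le> cosh c * cosh c ^ card I"
    using insert.prems by (intro mult_left_mono insert.IH) (auto intro: indep_vars_subset)
  also have "\<dots> = cosh c ^ card (insert j I)"
    using insert.hyps by simp
  finally show ?case .
qed

lemma (in prob_space) expectation_cosh_scaled_norm_sum_le:
  fixes Z :: "'i \<Rightarrow> 'a \<Rightarrow> 'x::euclidean_space" and c l :: real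
  assumes "finite I" and indep: "indep_vars (\<lambda>_. borel) Z I"
    and bnd: "\<And>i \<omega>. i \<in> I \<Longrightarrow> \<omega> \<in> space M \<Longrightarrow> norm (Z i \<omega>) \<le> c"
    and mean: "\<And>i. i \<in> I \<Longrightarrow> expectation (Z i) = 0"
    and "0 \<le> l"
  shows "integrable M (\<lambda>\<omega>. cosh (l * norm (\<Sum>i\<in>I. Z i \<omega>)))"
    and "expectation (\<lambda>\<omega>. cosh (l * norm (\<Sum>i\<in>I. Z i \<omega>))) \<le> exp (card I * (l * c) ^ 2 / 2)"
proof -
  have [measurable]: "Z i \<in> borel_measurable M" if "i \<in> I" for i
    using indep that by (auto simp: indep_vars_def)
  have "norm (cosh (l * norm (\<Sum>i\<in>I. Z i \<omega>))) \<le> cosh (l * (card I * c))"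
    if "\<omega> \<in> space M" for \<omega>
  proof -
    have "norm (\<Sum>i\<in>I. Z i \<omega>) \<le> card I * c"
      using sum_norm_le[of I "\<lambda>i. Z i \<omega>" "\<lambda>_. c"] bnd that by auto
    then have "0 \<le> l * norm (\<Sum>i\<in>I. Z i \<omega>)" "l * norm (\<Sum>i\<in>I. Z i \<omega>) \<le> l * (card I * c)"
      using \<open>0 \<le> l\<close> by (auto intro: mult_left_mono)
    then show ?thesis
      by (simp add: cosh_real_nonneg_le_iff)
  qed
  then show "integrable M (\<lambda>\<omega>. cosh (l * norm (\<Sum>i\<in>I. Z i \<omega>)))"
    by (intro integrable_const_bound[where B = "cosh (l * (card I * c))"] AE_I2) auto
  have "expectation (\<lambda>\<omega>. cosh (norm (\<Sum>i\<in>I. l *\<^sub>R Z i \<omega>))) \<le> cosh (l * c) ^ card I"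
  proof (rule expectation_cosh_norm_sum_le[OF \<open>finite I\<close>])
    show "indep_vars (\<lambda>_. borel) (\<lambda>i \<omega>. l *\<^sub>R Z i \<omega>) I"
      by (rule indep_vars_compose2[OF indep]) auto
    show "norm (l *\<^sub>R Z i \<omega>) \<le> l * c" if "i \<in> I" "\<omega> \<in> space M" for i \<omega>
      using bnd[OF that] \<open>0 \<le> l\<close> by (simp add: mult_left_mono)
  qed (simp add: mean)
  also have "\<dots> \<le> exp ((l * c) ^ 2 / 2) ^ card I"
    by (rule power_mono[OF cosh_le_exp_half_square]) simp
  finally show "expectation (\<lambda>\<omega>. cosh (l * norm (\<Sum>i\<in>I. Z i \<omega>))) \<le> exp (card I * (l * c) ^ 2 / 2)"
    using \<open>0 \<le> l\<close> by (simp add: exp_of_nat_mult[symmetric] flip: scaleR_sum_right)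
qed

lemma (in prob_space) norm_sum_Hoeffding_ineq:
  fixes Z :: "'i \<Rightarrow> 'a \<Rightarrow> 'x::euclidean_space" and c r :: real
  assumes "finite I" and indep: "indep_vars (\<lambda>_. borel) Z I"
    and bnd: "\<And>i \<omega>. i \<in> I \<Longrightarrow> \<omega> \<in> space M \<Longrightarrow> norm (Z i \<omega>) \<le> c"
    and mean: "\<And>i. i \<in> I \<Longrightarrow> expectation (Z i) = 0"
    and "0 < c" "0 < r"
  shows "prob {\<omega> \<in> space M. r \<le> norm (\<Sum>i\<in>I. Z i \<omega>)} \<le> 2 * exp (- r\<^sup>2 / (2 * card I * c\<^sup>2))"
proof (cases "I = {}")
  case True
  then show ?thesis using \<open>0 < r\<close> by simp
next
  case False
  define n where "n = card I"
  have n: "0 < n" using False \<open>finite I\<close> by (simp add: n_def card_gt_0_iff)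
  define l where "l = r / (n * c\<^sup>2)"
  have l: "0 < l" using n \<open>0 < c\<close> \<open>0 < r\<close> by (simp add: l_def)
  note cosh_moment = expectation_cosh_scaled_norm_sum_le[OF \<open>finite I\<close> indep bnd mean, of l,
      folded n_def]
  have [measurable]: "Z i \<in> borel_measurable M" if "i \<in> I" for i
    using indep that by (auto simp: indep_vars_def)
  have "prob {\<omega> \<in> space M. r \<le> norm (\<Sum>i\<in>I. Z i \<omega>)}
      = prob {\<omega> \<in> space M. cosh (l * r) \<le> cosh (l * norm (\<Sum>i\<in>I. Z i \<omega>))}"
    using l \<open>0 < r\<close> by (simp add: cosh_real_nonneg_le_iff)
  also have "\<dots> \<le> expectation (\<lambda>\<omega>. cosh (l * norm (\<Sum>i\<in>I. Z i \<omega>))) / cosh (l * r)"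
    using cosh_moment l by (intro integral_Markov_inequality_measure[where A = "space M"]) auto
  also have "\<dots> \<le> exp (n * (l * c) ^ 2 / 2) / (exp (l * r) / 2)"
    using cosh_moment l by (intro frac_le) (auto simp: cosh_def)
  also have "\<dots> = 2 * exp (n * (l * c) ^ 2 / 2 - l * r)"
    by (simp add: exp_diff)
  also have "n * (l * c) ^ 2 / 2 - l * r = - r\<^sup>2 / (2 * n * c\<^sup>2)"
    \<comment> \<open>l is the minimiser of this exponent.\<close>
    using n \<open>0 < c\<close> by (simp add: l_def power2_eq_square field_simps)
  finally show ?thesis by (simp add: n_def)
qed

lemma (in prob_space) expectation_centered_distr:
  fixes g :: "'b \<Rightarrow> 'x::{banach, second_countable_topology}"
  assumes X: "X \<in> measurable M D" and distr: "distr M D X = D" and g: "has_bochner_integral D g m"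
  shows "expectation (\<lambda>\<omega>. g (X \<omega>) - m) = 0"
proof -
  interpret D: prob_space D
    using prob_space_distr[OF X] distr by simp
  have "expectation (\<lambda>\<omega>. g (X \<omega>) - m) = integral\<^sup>L (distr M D X) (\<lambda>s. g s - m)"
    using X g by (simp add: integral_distr borel_measurable_has_bochner_integral)
  also have "\<dots> = integral\<^sup>L D g - integral\<^sup>L D (\<lambda>_. m)"
    unfolding distr using g by (intro Bochner_Integration.integral_diff) (auto intro: integrable.intros)
  also have "\<dots> = 0"
    using g by (simp add: has_bochner_integral_integral_eq D.prob_space)
  finally show ?thesis .
qed

lemma (in prob_space) norm_average_Hoeffding_ineq:
  fixes Z :: "'i \<Rightarrow> 'a \<Rightarrow> 'x::euclidean_space" and c t :: real
  assumes "finite I" "I \<noteq> {}" and indep: "indep_vars (\<lambda>_. borel) Z I"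
    and bnd: "\<And>i \<omega>. i \<in> I \<Longrightarrow> \<omega> \<in> space M \<Longrightarrow> norm (Z i \<omega>) \<le> c"
    and mean: "\<And>i. i \<in> I \<Longrightarrow> expectation (Z i) = 0"
    and "0 < c" "0 < t"
  shows "{\<omega> \<in> space M. t \<le> norm (\<Sum>i\<in>I. Z i \<omega>) / card I} \<in> events"
    and "prob {\<omega> \<in> space M. t \<le> norm (\<Sum>i\<in>I. Z i \<omega>) / card I} \<le> 2 * exp (- card I * t\<^sup>2 / (2 * c\<^sup>2))"
proof -
  have n: "0 < card I" using assms(1,2) by (simp add: card_gt_0_iff)
  have [measurable]: "Z i \<in> borel_measurable M" if "i \<in> I" for i
    using indep that by (auto simp: indep_vars_def)
  have set_eq: "{\<omega> \<in> space M. t \<le> norm (\<Sum>i\<in>I. Z i \<omega>) / card I}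
      = {\<omega> \<in> space M. card I * t \<le> norm (\<Sum>i\<in>I. Z i \<omega>)}"
    using n by (auto simp: field_simps)
  show "{\<omega> \<in> space M. t \<le> norm (\<Sum>i\<in>I. Z i \<omega>) / card I} \<in> events"
    unfolding set_eq by measurable
  have "prob {\<omega> \<in> space M. card I * t \<le> norm (\<Sum>i\<in>I. Z i \<omega>)}
      \<le> 2 * exp (- (card I * t)\<^sup>2 / (2 * card I * c\<^sup>2))"
    using n \<open>0 < t\<close> by (intro norm_sum_Hoeffding_ineq[OF \<open>finite I\<close> indep bnd mean \<open>0 < c\<close>]) auto
  also have "\<dots> = 2 * exp (- card I * t\<^sup>2 / (2 * c\<^sup>2))"
    using n by (simp add: power2_eq_square)
  finally show "prob {\<omega> \<in> space M. t \<le> norm (\<Sum>i\<in>I. Z i \<omega>) / card I}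
      \<le> 2 * exp (- card I * t\<^sup>2 / (2 * c\<^sup>2))"
    unfolding set_eq by simp
qed

lemma (in prob_space) prob_norm_average_gt_le:
  fixes Z :: "'i \<Rightarrow> 'a \<Rightarrow> 'x::euclidean_space" and V \<epsilon> :: real
  assumes "finite I" "I \<noteq> {}" and indep: "indep_vars (\<lambda>_. borel) Z I"
    and bnd: "\<And>i \<omega>. i \<in> I \<Longrightarrow> \<omega> \<in> space M \<Longrightarrow> norm (Z i \<omega>) \<le> V"
    and mean: "\<And>i. i \<in> I \<Longrightarrow> expectation (Z i) = 0"
    and "0 < \<epsilon>"
  shows "prob {\<omega> \<in> space M. V * sqrt (2 * ln (2 / \<epsilon>) / card I) < norm (\<Sum>i\<in>I. Z i \<omega>) / card I}
    \<le> \<epsilon>" (is "prob ?dev \<le> \<epsilon>")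
proof -
  define n where "n = card I"
  have n: "0 < n" using assms(1,2) by (simp add: n_def card_gt_0_iff)
  have sum_bnd: "norm (\<Sum>i\<in>I. Z i \<omega>) \<le> n * V" if "\<omega> \<in> space M" for \<omega>
    using sum_norm_le[of I "\<lambda>i. Z i \<omega>" "\<lambda>_. V"] bnd that by (simp add: n_def)
  consider "1 \<le> \<epsilon>" | "V \<le> 0" | "\<epsilon> < 1" "0 < V" by linarith
  then show ?thesis
  proof cases
    case 1
    then show ?thesis using prob_le_1 order_trans by blast
  next
    case 2
    have dev_empty: "?dev = {}"
    proof -
      have "\<not> V * sqrt (2 * ln (2 / \<epsilon>) / n) < norm (\<Sum>i\<in>I. Z i \<omega>) / n"
        if "\<omega> \<in> space M" for \<omega>
      proof -
        have "0 \<le> n * V" using order_trans[OF norm_ge_zero sum_bnd[OF that]] .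
        then have "V = 0" using n 2 by (simp add: zero_le_mult_iff)
        then show ?thesis using sum_bnd[OF that] by simp
      qed
      then show ?thesis by (auto simp: n_def)
    qed
    show ?thesis
      unfolding dev_empty using \<open>0 < \<epsilon>\<close> by simp
  next
    case 3
    define t where "t = V * sqrt (2 * ln (2 / \<epsilon>) / n)"
    have "0 < ln (2 / \<epsilon>)" using 3 \<open>0 < \<epsilon>\<close> by simp
    then have "0 < t" using 3 n by (simp add: t_def)
    note Hoeffding = norm_average_Hoeffding_ineq[OF assms(1,2) indep bnd mean \<open>0 < V\<close> \<open>0 < t\<close>, folded n_def]
    have "prob ?dev \<le> prob {\<omega> \<in> space M. t \<le> norm (\<Sum>i\<in>I. Z i \<omega>) / n}"
      by (rule finite_measure_mono[OF _ Hoeffding(1)]) (auto simp: t_def n_def)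
    also have "\<dots> \<le> 2 * exp (- n * t\<^sup>2 / (2 * V\<^sup>2))"
      by (rule Hoeffding(2))
    also have "\<dots> = \<epsilon>"
    proof -
      have "n * t\<^sup>2 / (2 * V\<^sup>2) = ln (2 / \<epsilon>)"
        using n 3 \<open>0 < ln (2 / \<epsilon>)\<close> by (simp add: t_def power_mult_distrib)
      then show ?thesis
        using \<open>0 < \<epsilon>\<close> by (simp add: exp_minus)
    qed
    finally show ?thesis .
  qed
qed

lemma (in prob_space) sample_mean_deviation:
  fixes X :: "'i \<Rightarrow> 'a \<Rightarrow> 'b" and g :: "'b \<Rightarrow> 'x::euclidean_space" and V \<epsilon> :: real
  assumes "finite I" "I \<noteq> {}"
    and indep: "indep_vars (\<lambda>_. D) X I" and distr: "\<And>i. i \<in> I \<Longrightarrow> distr M D (X i) = D"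
    and g_meas: "g \<in> borel_measurable D" and g_mean: "has_bochner_integral D g m"
    and g_bnd: "\<And>s. s \<in> space D \<Longrightarrow> norm (g s - m) \<le> V"
    and "0 < \<epsilon>"
  defines "dev \<equiv> {\<omega> \<in> space M.
      V * sqrt (2 * ln (2 / \<epsilon>) / card I) < norm ((1 / card I) *\<^sub>R (\<Sum>i\<in>I. g (X i \<omega>)) - m)}"
  shows "dev \<in> events" and "prob dev \<le> \<epsilon>"
proof -
  define Z where "Z i \<omega> = g (X i \<omega>) - m" for i \<omega>
  have X_meas[measurable]: "X i \<in> measurable M D" if "i \<in> I" for i
    using indep that by (auto simp: indep_vars_def)
  have [measurable]: "(\<lambda>\<omega>. \<Sum>i\<in>I. Z i \<omega>) \<in> borel_measurable M"
    unfolding Z_def by (intro borel_measurable_sum borel_measurable_diff measurable_compose[OF X_meas g_meas]) auto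
  have "(1 / card I) *\<^sub>R (\<Sum>i\<in>I. g (X i \<omega>)) - m = (1 / card I) *\<^sub>R (\<Sum>i\<in>I. Z i \<omega>)" for \<omega>
    using assms(1,2) by (simp add: Z_def sum_subtractf scaleR_diff_right sum_constant_scaleR)
  then have dev_eq: "dev = {\<omega> \<in> space M.
      V * sqrt (2 * ln (2 / \<epsilon>) / card I) < norm (\<Sum>i\<in>I. Z i \<omega>) / card I}"
    unfolding dev_def by simp
  show "dev \<in> events"
    unfolding dev_eq by measurable
  show "prob dev \<le> \<epsilon>"
    unfolding dev_eq
  proof (rule prob_norm_average_gt_le[OF assms(1,2) _ _ _ \<open>0 < \<epsilon>\<close>])
    show "indep_vars (\<lambda>_. borel) Z I"
      unfolding Z_def using g_meas by (intro indep_vars_compose2[OF indep]) auto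
    show "norm (Z i \<omega>) \<le> V" if "i \<in> I" "\<omega> \<in> space M" for i \<omega>
      using g_bnd measurable_space[OF X_meas[OF that(1)] that(2)] by (simp add: Z_def)
    show "expectation (Z i) = 0" if "i \<in> I" for i
      unfolding Z_def[abs_def] using X_meas[OF that] distr[OF that] g_mean by (rule expectation_centered_distr)
  qed
qed

lemma (in prob_space) sample_mean_deviation_row:
  fixes \<xi> :: "'k \<Rightarrow> nat \<Rightarrow> 'a \<Rightarrow> 'b" and g :: "'b \<Rightarrow> 'x::euclidean_space" and V \<epsilon> :: real
  assumes indep: "indep_vars (\<lambda>_. D) (\<lambda>(k, i). \<xi> k i) (H \<times> {1..B})" and "k \<in> H" "0 < B"
    and distr: "\<And>i. i \<in> {1..B} \<Longrightarrow> distr M D (\<xi> k i) = D"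
    and g_meas: "g \<in> borel_measurable D" and g_mean: "has_bochner_integral D g m"
    and g_bnd: "\<And>s. s \<in> space D \<Longrightarrow> norm (g s - m) \<le> V"
    and "0 < \<epsilon>"
  defines "dev \<equiv> {\<omega> \<in> space M.
      V * sqrt (2 * ln (2 / \<epsilon>) / B) < norm ((1 / B) *\<^sub>R (\<Sum>i = 1..B. g (\<xi> k i \<omega>)) - m)}"
  shows "dev \<in> events" and "prob dev \<le> \<epsilon>"
proof -
  let ?I = "{k} \<times> {1..B}"
  have "?I = Pair k ` {1..B}" by auto
  then have "(\<Sum>p\<in>?I. g ((\<lambda>(k, i). \<xi> k i) p \<omega>)) = (\<Sum>i = 1..B. g (\<xi> k i \<omega>))" for \<omega>
    by (simp add: sum.reindex inj_on_def)
  then have dev_eq: "dev = {\<omega> \<in> space M. V * sqrt (2 * ln (2 / \<epsilon>) / card ?I)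
      < norm ((1 / card ?I) *\<^sub>R (\<Sum>p\<in>?I. g ((\<lambda>(k, i). \<xi> k i) p \<omega>)) - m)}"
    by (simp add: dev_def card_cartesian_product)
  have I: "?I \<subseteq> H \<times> {1..B}" "finite ?I" "?I \<noteq> {}"
    using \<open>k \<in> H\<close> \<open>0 < B\<close> by auto
  have "distr M D ((\<lambda>(k, i). \<xi> k i) p) = D" if "p \<in> ?I" for p
    using that distr by auto
  from sample_mean_deviation[OF I(2,3) indep_vars_subset[OF indep I(1)] this g_meas g_mean g_bnd
      \<open>0 < \<epsilon>\<close>]
  show "dev \<in> events" and "prob dev \<le> \<epsilon>"
    unfolding dev_eq by blast+
qed

lemma (in prob_space) prob_Diff_UN_ge:
  fixes \<epsilon> :: real
  assumes "finite I" "\<And>i. i \<in> I \<Longrightarrow> A i \<in> events" "\<And>i. i \<in> I \<Longrightarrow> prob (A i) \<le> \<epsilon>"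
  shows "1 - card I * \<epsilon> \<le> prob (space M - (\<Union>i\<in>I. A i))"
proof -
  have "prob (\<Union>i\<in>I. A i) \<le> (\<Sum>i\<in>I. prob (A i))"
    using assms by (intro finite_measure_subadditive_finite) auto
  also have "\<dots> \<le> card I * \<epsilon>"
    using sum_mono[of I "\<lambda>i. prob (A i)" "\<lambda>_. \<epsilon>"] assms by simp
  finally show ?thesis
    using assms by (subst prob_compl) auto
qed

section \<open>The median rule\<close>

lemma majorities_intersect:
  assumes "finite S" "A \<subseteq> S" "B \<subseteq> S" "card S < card A + card B"
  shows "A \<inter> B \<noteq> {}"
  by (metis assms card_Un_disjoint card_mono finite_subset leD le_sup_iff)

lemma med_node_exists:
  fixes v :: "nat \<Rightarrow> 'a::real_normed_vector"
  assumes "H \<subseteq> {1..K}" "real K / 2 < real (card H)"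
    and close: "\<And>k. k \<in> H \<Longrightarrow> norm (v k - g) \<le> r" and "2 * r \<le> T"
  shows "\<exists>j. med_node K T v j"
proof -
  obtain j where j: "j \<in> H" using assms(2) by fastforce
  have "H \<subseteq> {k \<in> {1..K}. norm (v k - v j) \<le> T}"
  proof
    fix k assume "k \<in> H"
    then have "norm (v k - v j) \<le> r + r"
      using close[of k] close[OF j] by (intro norm_diff_triangle_le) (auto simp: norm_minus_commute)
    with \<open>k \<in> H\<close> assms(1,4) show "k \<in> {k \<in> {1..K}. norm (v k - v j) \<le> T}" by auto
  qed
  then have "card H \<le> card {k \<in> {1..K}. norm (v k - v j) \<le> T}"
    by (intro card_mono) auto
  with assms(1,2) j have "med_node K T v j"
    unfolding med_node_def by auto
  then show ?thesis ..
qed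

lemma med_node_close:
  fixes v :: "nat \<Rightarrow> 'a::real_normed_vector"
  assumes "H \<subseteq> {1..K}" "real K / 2 < real (card H)"
    and close: "\<And>k. k \<in> H \<Longrightarrow> norm (v k - g) \<le> r" and "med_node K T v j"
  shows "norm (v j - g) \<le> T + r" and "\<And>k. k \<in> H \<Longrightarrow> norm (v k - v j) \<le> T + 2 * r"
proof -
  let ?N = "{k \<in> {1..K}. norm (v k - v j) \<le> T}"
  have "H \<inter> ?N \<noteq> {}"
    using assms(1,2,4) by (intro majorities_intersect[where S = "{1..K}"]) (auto simp: med_node_def)
  then obtain k' where "k' \<in> H" "norm (v j - v k') \<le> T"
    by (auto simp: norm_minus_commute)
  then show j_close: "norm (v j - g) \<le> T + r"
    using close by (intro norm_diff_triangle_le) auto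
  show "norm (v k - v j) \<le> T + 2 * r" if "k \<in> H" for k
    using norm_diff_triangle_le[OF close[OF that], of "v j" "T + r"] j_close
    by (simp add: norm_minus_commute)
qed

lemma med_node_robust:
  fixes v :: "nat \<Rightarrow> 'a::real_normed_vector"
  assumes "H \<subseteq> {1..K}" "real K / 2 < real (card H)" and close: "\<forall>k\<in>H. norm (v k - g) \<le> r"
  shows "(\<exists>j. med_node K (2 * r) v j) \<and>
    (\<forall>j. med_node K (2 * r) v j \<longrightarrow> (\<forall>k\<in>H. norm (v k - v j) \<le> 4 * r) \<and> norm (v j - g) \<le> 3 * r)"
  using med_node_exists[OF assms(1,2), of v g r "2 * r"] med_node_close[OF assms(1,2), of v g r "2 * r"] close
  by auto

theorem lemma5:
  fixes M :: "'w measure" and D :: "'b measure"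
    and f :: "'x::euclidean_space \<Rightarrow> 'b \<Rightarrow> real" and F :: "'x \<Rightarrow> real"
    and gs :: "'x \<Rightarrow> 'b \<Rightarrow> 'x" and gF :: "'x \<Rightarrow> 'x"
    and V \<delta> \<alpha> :: real and K B :: nat and Hon :: "nat set"
    and \<xi> :: "nat \<Rightarrow> nat \<Rightarrow> 'w \<Rightarrow> 'b"
    and x :: 'x
    and mu :: "'w \<Rightarrow> nat \<Rightarrow> 'x"
  assumes "prob_space M" and "prob_space D"
    and F_def: "\<And>y. F y = integral\<^sup>L D (f y)"
    and f_grad: "\<And>y s. ((\<lambda>z. f z s) has_derivative (\<lambda>h. gs y s \<bullet> h)) (at y)"
    and F_grad: "\<And>y. (F has_derivative (\<lambda>h. gF y \<bullet> h)) (at y)"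
    and gs_meas: "\<And>y. gs y \<in> borel_measurable D"
    and unbiased: "\<And>y. has_bochner_integral D (gs y) (gF y)"
    and noise: "\<And>y s. s \<in> space D \<Longrightarrow> norm (gs y s - gF y) \<le> V"
    and "0 < \<delta>" and "\<delta> < 1"
    and "0 \<le> \<alpha>" and "\<alpha> < 1/2"
    and "0 < K" and "Hon \<subseteq> {1..K}" and "real (card Hon) \<ge> (1 - \<alpha>) * real K"
    and "0 < B"
    and indep: "prob_space.indep_vars M (\<lambda>_. D) (\<lambda>(k, i). \<xi> k i) (Hon \<times> {1..B})"
    and distr: "\<And>k i. k \<in> Hon \<Longrightarrow> i \<in> {1..B} \<Longrightarrow> distr M D (\<xi> k i) = D"
    and honest: "\<And>\<omega> k. k \<in> Hon \<Longrightarrow>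
        mu \<omega> k = (1 / real B) *\<^sub>R (\<Sum>i = 1..B. gs x (\<xi> k i \<omega>))"
  shows "\<exists>E \<in> sets M. prob_space.prob M E \<ge> 1 - \<delta> \<and>
    (\<forall>\<omega> \<in> E.
      (let C = 2 * ln (2 * real K / \<delta>); r = V * sqrt (C / real B); T = 2 * r in
        (\<forall>k \<in> Hon. norm (mu \<omega> k - gF x) \<le> r) \<and>
        (\<exists>j. med_node K T (mu \<omega>) j) \<and>
        (\<forall>j. med_node K T (mu \<omega>) j \<longrightarrow>
           (\<forall>k \<in> Hon. norm (mu \<omega> k - mu \<omega> j) \<le> 4 * r) \<and>
           norm (mu \<omega> j - gF x) \<le> 3 * r)))"
proof -
  interpret P: prob_space M by fact
  define r where "r = V * sqrt (2 * ln (2 * real K / \<delta>) / real B)"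
  define bad where "bad k = {\<omega> \<in> space M. r < norm (mu \<omega> k - gF x)}" for k
  have bad: "bad k \<in> P.events \<and> P.prob (bad k) \<le> \<delta> / K" if "k \<in> Hon" for k
  proof -
    have "0 < \<delta> / K" using \<open>0 < K\<close> \<open>0 < \<delta>\<close> by simp
    note row = P.sample_mean_deviation_row[OF indep that \<open>0 < B\<close> distr[OF that] gs_meas[of x]
        unbiased noise this]
    have ratio: "2 / (\<delta> / K) = 2 * real K / \<delta>" by simp
    show ?thesis
      using row[unfolded ratio] unfolding bad_def r_def honest[OF that] by blast
  qed
  define E where "E = space M - (\<Union>k\<in>Hon. bad k)"
  have "E \<in> P.events"
    unfolding E_def using bad finite_subset[OF \<open>Hon \<subseteq> {1..K}\<close>] by auto
  have "1 - \<delta> \<le> 1 - card Hon * (\<delta> / K)"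
    using card_mono[OF _ \<open>Hon \<subseteq> {1..K}\<close>] \<open>0 < K\<close> \<open>0 < \<delta>\<close> by (simp add: field_simps)
  also have "\<dots> \<le> P.prob E"
    unfolding E_def using bad finite_subset[OF \<open>Hon \<subseteq> {1..K}\<close>] by (intro P.prob_Diff_UN_ge) auto
  finally have "1 - \<delta> \<le> P.prob E" .
  have "(1 / 2) * real K < (1 - \<alpha>) * real K"
    using \<open>\<alpha> < 1/2\<close> \<open>0 < K\<close> by (intro mult_strict_right_mono) auto
  with \<open>real (card Hon) \<ge> (1 - \<alpha>) * real K\<close> have majority: "real K / 2 < real (card Hon)"
    by linarith
  have "\<forall>k\<in>Hon. norm (mu \<omega> k - gF x) \<le> r" if "\<omega> \<in> E" for \<omega>
    using that by (auto simp: E_def bad_def)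
  then show ?thesis
    unfolding Let_def r_def[symmetric]
    using med_node_robust[OF \<open>Hon \<subseteq> {1..K}\<close> majority] \<open>E \<in> P.events\<close> \<open>1 - \<delta> \<le> P.prob E\<close>
    by blast
qed

end
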